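(* $\mathsf{GKur}=\mathsf{MS4}+\Box\forall\Diamond\Box p\to\Diamond\Box\forall p=\mathsf{MS4}+\Box\neg\Box\forall\neg p\to\neg\Box\forall\neg\Box\Diamond p$.
   Context: $\mathsf{MIPC}$ is the smallest set of formulas in the bimodal language $\mathcal{L}_{\forall\exists}$ containing all theorems of $\mathsf{IPC}$; $\forall(p\wedge q)\leftrightarrow(\forall p\wedge\forall q)$, $\forall p\to p$, $\forall p\to\forall\forall p$; $\exists(p\vee q)\leftrightarrow(\exists p\vee\exists q)$, $p\to\exists p$, $\exists\exists p\to\exists p$, $(\exists p\wedge\exists q)\to\exists(\exists p\wedge q)$; $\exists\forall p\to\forall p$, $\exists p\to\forall\exists p$; closed under modus ponens, substitution and $\varphi/\forall\varphi$. $\mathsf{Kur}=\mathsf{MIPC}+\forall\neg\neg p\to\neg\neg\forall p$. $\mathsf{MS4}$ is the smallest set of formulas in the classical bimodal language $\mathcal{L}_{\Box\forall}$ containing all classical tautologies, the $\mathsf{S4}$ axioms for $\Box$, the $\mathsf{S5}$ axioms for $\forall$, and $\Box\forall p\to\forall\Box p$, closed under modus ponens, substitution, $\Box$- and $\forall$-necessitation; $\Diamond=\neg\Box\neg$, $\exists=\neg\forall\neg$. $\mathsf{GKur}=\mathsf{MS4}+\{\varphi^t:\mathsf{Kur}\vdash\varphi\}$, with Gödel translation $\bot^t=\bot$, $p^t=\Box p$, $(\varphi\wedge\psi)^t=\varphi^t\wedge\psi^t$, $(\varphi\vee\psi)^t=\varphi^t\vee\psi^t$, $(\varphi\to\psi)^t=\Box(\neg\varphi^t\vee\psi^t)$,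 $(\forall\varphi)^t=\Box\forall\varphi^t$, $(\exists\varphi)^t=\exists\varphi^t$. *)

theory Defs
  imports Main
begin

datatype iform = IBot | IVar nat | IAnd iform iform | IOr iform iform
  | IImp iform iform | IAll iform | IEx iform

definition INeg :: "iform \<Rightarrow> iform" where "INeg a = IImp a IBot"
definition IIff :: "iform \<Rightarrow> iform \<Rightarrow> iform" where
  "IIff a b = IAnd (IImp a b) (IImp b a)"

fun isubst :: "(nat \<Rightarrow> iform) \<Rightarrow> iform \<Rightarrow> iform" where
  "isubst s IBot = IBot"
| "isubst s (IVar n) = s n"
| "isubst s (IAnd a b) = IAnd (isubst s a) (isubst s b)"
| "isubst s (IOr a b) = IOr (isubst s a) (isubst s b)"
| "isubst s (IImp a b) = IImp (isubst s a) (isubst s b)"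
| "isubst s (IAll a) = IAll (isubst s a)"
| "isubst s (IEx a) = IEx (isubst s a)"

fun iprop :: "iform \<Rightarrow> bool" where
  "iprop IBot = True"
| "iprop (IVar n) = True"
| "iprop (IAnd a b) = (iprop a \<and> iprop b)"
| "iprop (IOr a b) = (iprop a \<and> iprop b)"
| "iprop (IImp a b) = (iprop a \<and> iprop b)"
| "iprop (IAll a) = False"
| "iprop (IEx a) = False"

inductive_set IPC :: "iform set" where
  ipc1: "iprop a \<Longrightarrow> iprop b \<Longrightarrow> IImp a (IImp b a) \<in> IPC"
| ipc2: "iprop a \<Longrightarrow> iprop b \<Longrightarrow> iprop c \<Longrightarrow>
     IImp (IImp a (IImp b c)) (IImp (IImp a b) (IImp a c)) \<in> IPC"
| ipc3: "iprop a \<Longrightarrow> iprop b \<Longrightarrow> IImp (IAnd a b) a \<in> IPC"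
| ipc4: "iprop a \<Longrightarrow> iprop b \<Longrightarrow> IImp (IAnd a b) b \<in> IPC"
| ipc5: "iprop a \<Longrightarrow> iprop b \<Longrightarrow> IImp a (IImp b (IAnd a b)) \<in> IPC"
| ipc6: "iprop a \<Longrightarrow> iprop b \<Longrightarrow> IImp a (IOr a b) \<in> IPC"
| ipc7: "iprop a \<Longrightarrow> iprop b \<Longrightarrow> IImp b (IOr a b) \<in> IPC"
| ipc8: "iprop a \<Longrightarrow> iprop b \<Longrightarrow> iprop c \<Longrightarrow>
     IImp (IImp a c) (IImp (IImp b c) (IImp (IOr a b) c)) \<in> IPC"
| ipc9: "iprop a \<Longrightarrow> IImp IBot a \<in> IPC"
| ipc_mp: "a \<in> IPC \<Longrightarrow> IImp a b \<in> IPC \<Longrightarrow> b \<in> IPC"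

abbreviation "ip \<equiv> IVar 0"
abbreviation "iq \<equiv> IVar 1"

inductive_set MIPC_ext :: "iform set \<Rightarrow> iform set" for Ax :: "iform set" where
  m_ipc: "a \<in> IPC \<Longrightarrow> a \<in> MIPC_ext Ax"
| m_extra: "a \<in> Ax \<Longrightarrow> a \<in> MIPC_ext Ax"
| m_a1: "IIff (IAll (IAnd ip iq)) (IAnd (IAll ip) (IAll iq)) \<in> MIPC_ext Ax"
| m_a2: "IImp (IAll ip) ip \<in> MIPC_ext Ax"
| m_a3: "IImp (IAll ip) (IAll (IAll ip)) \<in> MIPC_ext Ax"
| m_e1: "IIff (IEx (IOr ip iq)) (IOr (IEx ip) (IEx iq)) \<in> MIPC_ext Ax"
| m_e2: "IImp ip (IEx ip) \<in> MIPC_ext Ax"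
| m_e3: "IImp (IEx (IEx ip)) (IEx ip) \<in> MIPC_ext Ax"
| m_e4: "IImp (IAnd (IEx ip) (IEx iq)) (IEx (IAnd (IEx ip) iq)) \<in> MIPC_ext Ax"
| m_c1: "IImp (IEx (IAll ip)) (IAll ip) \<in> MIPC_ext Ax"
| m_c2: "IImp (IEx ip) (IAll (IEx ip)) \<in> MIPC_ext Ax"
| m_mp: "a \<in> MIPC_ext Ax \<Longrightarrow> IImp a b \<in> MIPC_ext Ax \<Longrightarrow> b \<in> MIPC_ext Ax"
| m_subst: "a \<in> MIPC_ext Ax \<Longrightarrow> isubst s a \<in> MIPC_ext Ax"
| m_nec: "a \<in> MIPC_ext Ax \<Longrightarrow> IAll a \<in> MIPC_ext Ax"

definition MIPC :: "iform set" where "MIPC = MIPC_ext {}"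

definition Kur :: "iform set" where
  "Kur = MIPC_ext {IImp (IAll (INeg (INeg ip))) (INeg (INeg (IAll ip)))}"

datatype cform = CBot | CVar nat | CNeg cform | CAnd cform cform | COr cform cform
  | CImp cform cform | CBox cform | CAll cform

definition CDia :: "cform \<Rightarrow> cform" where "CDia a = CNeg (CBox (CNeg a))"
definition CEx :: "cform \<Rightarrow> cform" where "CEx a = CNeg (CAll (CNeg a))"

fun csubst :: "(nat \<Rightarrow> cform) \<Rightarrow> cform \<Rightarrow> cform" where
  "csubst s CBot = CBot"
| "csubst s (CVar n) = s n"
| "csubst s (CNeg a) = CNeg (csubst s a)"
| "csubst s (CAnd a b) = CAnd (csubst s a) (csubst s b)"
| "csubst s (COr a b) = COr (csubst s a) (csubst s b)"
| "csubst s (CImp a b) = CImp (csubst s a) (csubst s b)"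
| "csubst s (CBox a) = CBox (csubst s a)"
| "csubst s (CAll a) = CAll (csubst s a)"

text \<open>Boolean evaluation treating variables and modalized formulas as atoms;
  classical tautologies of the bimodal language are the formulas true under
  every such valuation (i.e. substitution instances of propositional tautologies).\<close>
fun ceval :: "(cform \<Rightarrow> bool) \<Rightarrow> cform \<Rightarrow> bool" where
  "ceval v CBot = False"
| "ceval v (CVar n) = v (CVar n)"
| "ceval v (CNeg a) = (\<not> ceval v a)"
| "ceval v (CAnd a b) = (ceval v a \<and> ceval v b)"
| "ceval v (COr a b) = (ceval v a \<or> ceval v b)"
| "ceval v (CImp a b) = (ceval v a \<longrightarrow> ceval v b)"
| "ceval v (CBox a) = v (CBox a)"
| "ceval v (CAll a) = v (CAll a)"

definition tautology :: "cform \<Rightarrow> bool" where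
  "tautology a = (\<forall>v. ceval v a)"

abbreviation "cp \<equiv> CVar 0"
abbreviation "cq \<equiv> CVar 1"

inductive_set MS4_ext :: "cform set \<Rightarrow> cform set" for Ax :: "cform set" where
  s_taut: "tautology a \<Longrightarrow> a \<in> MS4_ext Ax"
| s_extra: "a \<in> Ax \<Longrightarrow> a \<in> MS4_ext Ax"
| s_boxK: "CImp (CBox (CImp cp cq)) (CImp (CBox cp) (CBox cq)) \<in> MS4_ext Ax"
| s_boxT: "CImp (CBox cp) cp \<in> MS4_ext Ax"
| s_box4: "CImp (CBox cp) (CBox (CBox cp)) \<in> MS4_ext Ax"
| s_allK: "CImp (CAll (CImp cp cq)) (CImp (CAll cp) (CAll cq)) \<in> MS4_ext Ax"
| s_allT: "CImp (CAll cp) cp \<in> MS4_ext Ax"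
| s_all5: "CImp (CNeg (CAll cp)) (CAll (CNeg (CAll cp))) \<in> MS4_ext Ax"
| s_lc: "CImp (CBox (CAll cp)) (CAll (CBox cp)) \<in> MS4_ext Ax"
| s_mp: "a \<in> MS4_ext Ax \<Longrightarrow> CImp a b \<in> MS4_ext Ax \<Longrightarrow> b \<in> MS4_ext Ax"
| s_subst: "a \<in> MS4_ext Ax \<Longrightarrow> csubst s a \<in> MS4_ext Ax"
| s_boxnec: "a \<in> MS4_ext Ax \<Longrightarrow> CBox a \<in> MS4_ext Ax"
| s_allnec: "a \<in> MS4_ext Ax \<Longrightarrow> CAll a \<in> MS4_ext Ax"

definition MS4 :: "cform set" where "MS4 = MS4_ext {}"

fun goedel :: "iform \<Rightarrow> cform" where
  "goedel IBot = CBot"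
| "goedel (IVar n) = CBox (CVar n)"
| "goedel (IAnd a b) = CAnd (goedel a) (goedel b)"
| "goedel (IOr a b) = COr (goedel a) (goedel b)"
| "goedel (IImp a b) = CBox (COr (CNeg (goedel a)) (goedel b))"
| "goedel (IAll a) = CBox (CAll (goedel a))"
| "goedel (IEx a) = CEx (goedel a)"

definition GKur :: "cform set" where
  "GKur = MS4_ext (goedel ` Kur)"

end

(*
  Soundness of the Goedel translation: if MIPC + Ax proves a formula, then MS4 + Ax^t proves
  its translation, because every translated formula implies its own box. Hence GKur is
  axiomatised over MS4 by the translation of the Kuroda axiom alone. In MS4 we have
  Box All Box p <-> Box All p and (not not a)^t <-> Box Dia a^t, so this translation is
  equivalent to Box (Box All Dia Box p -> Box Dia Box All p), which by T, 4 and
  necessitation is interderivable with Box All Dia Box p -> Dia Box All p. The second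
  axiom is the contrapositive of the instance p := not p of the first, and conversely
  up to replacing not not p by p under the modalities.
*)
theory Submission
  imports Defs
begin

declare tautology_def [simp]

abbreviation MS4_equiv :: "cform set \<Rightarrow> cform \<Rightarrow> cform \<Rightarrow> bool" where
  "MS4_equiv Ax a b \<equiv> CImp a b \<in> MS4_ext Ax \<and> CImp b a \<in> MS4_ext Ax"

abbreviation strict_imp :: "cform \<Rightarrow> cform \<Rightarrow> cform" where
  "strict_imp a b \<equiv> CBox (COr (CNeg a) b)"

lemma csubst_CEx [simp]: "csubst s (CEx a) = CEx (csubst s a)"
  by (simp add: CEx_def)

lemma csubst_CDia [simp]: "csubst s (CDia a) = CDia (csubst s a)"
  by (simp add: CDia_def)

lemma taut_mp: "a \<in> MS4_ext Ax \<Longrightarrow> tautology (CImp a b) \<Longrightarrow> b \<in> MS4_ext Ax"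
  by (meson s_mp s_taut)

lemma taut_mp2:
  "a \<in> MS4_ext Ax \<Longrightarrow> b \<in> MS4_ext Ax \<Longrightarrow> tautology (CImp a (CImp b c)) \<Longrightarrow> c \<in> MS4_ext Ax"
  by (meson s_mp s_taut)

lemma taut_mp3:
  "a \<in> MS4_ext Ax \<Longrightarrow> b \<in> MS4_ext Ax \<Longrightarrow> c \<in> MS4_ext Ax
    \<Longrightarrow> tautology (CImp a (CImp b (CImp c d))) \<Longrightarrow> d \<in> MS4_ext Ax"
  by (meson s_mp s_taut)

lemma imp_trans:
  assumes "CImp a b \<in> MS4_ext Ax" and "CImp b c \<in> MS4_ext Ax"
  shows "CImp a c \<in> MS4_ext Ax"
  using assms by (rule taut_mp2) auto

lemma contrapos:
  assumes "CImp a b \<in> MS4_ext Ax"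
  shows "CImp (CNeg b) (CNeg a) \<in> MS4_ext Ax"
  using assms by (rule taut_mp) auto

lemma boxK: "CImp (CBox (CImp a b)) (CImp (CBox a) (CBox b)) \<in> MS4_ext Ax"
  using s_subst[OF s_boxK, where s = "\<lambda>n. if n = 0 then a else b"] by simp

lemma boxT: "CImp (CBox a) a \<in> MS4_ext Ax"
  using s_subst[OF s_boxT, where s = "\<lambda>_. a"] by simp

lemma box4: "CImp (CBox a) (CBox (CBox a)) \<in> MS4_ext Ax"
  using s_subst[OF s_box4, where s = "\<lambda>_. a"] by simp

lemma allK: "CImp (CAll (CImp a b)) (CImp (CAll a) (CAll b)) \<in> MS4_ext Ax"
  using s_subst[OF s_allK, where s = "\<lambda>n. if n = 0 then a else b"] by simp

lemma allT: "CImp (CAll a) a \<in> MS4_ext Ax"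
  using s_subst[OF s_allT, where s = "\<lambda>_. a"] by simp

lemma all5: "CImp (CNeg (CAll a)) (CAll (CNeg (CAll a))) \<in> MS4_ext Ax"
  using s_subst[OF s_all5, where s = "\<lambda>_. a"] by simp

lemma ex_imp_all_ex: "CImp (CEx a) (CAll (CEx a)) \<in> MS4_ext Ax"
  unfolding CEx_def by (rule all5)

lemma box_all_imp_all_box: "CImp (CBox (CAll a)) (CAll (CBox a)) \<in> MS4_ext Ax"
  using s_subst[OF s_lc, where s = "\<lambda>_. a"] by simp

lemma box_mono: "CImp a b \<in> MS4_ext Ax \<Longrightarrow> CImp (CBox a) (CBox b) \<in> MS4_ext Ax"
  using s_mp[OF s_boxnec boxK] .

lemma all_mono: "CImp a b \<in> MS4_ext Ax \<Longrightarrow> CImp (CAll a) (CAll b) \<in> MS4_ext Ax"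
  using s_mp[OF s_allnec allK] .

lemma ex_mono: "CImp a b \<in> MS4_ext Ax \<Longrightarrow> CImp (CEx a) (CEx b) \<in> MS4_ext Ax"
  unfolding CEx_def by (intro contrapos all_mono)

lemma box_conj: "CImp (CAnd (CBox a) (CBox b)) (CBox (CAnd a b)) \<in> MS4_ext Ax"
proof -
  have "CImp (CBox a) (CBox (CImp b (CAnd a b))) \<in> MS4_ext Ax"
    by (rule box_mono, rule s_taut) auto
  then show ?thesis by (rule taut_mp2[OF _ boxK]) auto
qed

lemma box_disj: "CImp (COr (CBox a) (CBox b)) (CBox (COr a b)) \<in> MS4_ext Ax"
proof -
  have "CImp (CBox a) (CBox (COr a b)) \<in> MS4_ext Ax" "CImp (CBox b) (CBox (COr a b)) \<in> MS4_ext Ax"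
    by (rule box_mono, rule s_taut, simp)+
  then show ?thesis by (rule taut_mp2) auto
qed

lemma all_conj: "CImp (CAnd (CAll a) (CAll b)) (CAll (CAnd a b)) \<in> MS4_ext Ax"
proof -
  have "CImp (CAll a) (CAll (CImp b (CAnd a b))) \<in> MS4_ext Ax"
    by (rule all_mono, rule s_taut) auto
  then show ?thesis by (rule taut_mp2[OF _ allK]) auto
qed

lemma ex_intro: "CImp a (CEx a) \<in> MS4_ext Ax"
  unfolding CEx_def by (rule taut_mp[OF allT[of "CNeg a"]]) auto

lemma ex_all_imp_all: "CImp (CEx (CAll a)) (CAll a) \<in> MS4_ext Ax"
  unfolding CEx_def by (rule taut_mp[OF all5[of a]]) auto

lemma all_imp_all_all: "CImp (CAll a) (CAll (CAll a)) \<in> MS4_ext Ax"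
  by (rule imp_trans[OF ex_intro imp_trans[OF ex_imp_all_ex all_mono[OF ex_all_imp_all]]])

lemma ex_ex_imp_ex: "CImp (CEx (CEx a)) (CEx a) \<in> MS4_ext Ax"
proof -
  have "CImp (CAll (CNeg a)) (CAll (CNeg (CEx a))) \<in> MS4_ext Ax"
    by (rule imp_trans[OF all_imp_all_all all_mono], rule s_taut) (simp add: CEx_def)
  from contrapos[OF this] show ?thesis unfolding CEx_def .
qed

lemma ex_imp_if_imp_all:
  assumes "CImp a (CAll a) \<in> MS4_ext Ax"
  shows "CImp (CEx a) a \<in> MS4_ext Ax"
  by (rule imp_trans[OF ex_mono[OF assms] imp_trans[OF ex_all_imp_all allT]])

lemma box_all_imp_all_box_all: "CImp (CBox (CAll a)) (CAll (CBox (CAll a))) \<in> MS4_ext Ax"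
  by (rule imp_trans[OF box_mono[OF all_imp_all_all] box_all_imp_all_box])

lemma ex_box_imp_box_ex: "CImp (CEx (CBox a)) (CBox (CEx a)) \<in> MS4_ext Ax"
proof -
  have "CImp (CBox (CEx a)) (CAll (CBox (CEx a))) \<in> MS4_ext Ax"
    by (rule imp_trans[OF box_mono[OF ex_imp_all_ex] box_all_imp_all_box])
  then show ?thesis by (rule imp_trans[OF ex_mono[OF box_mono[OF ex_intro]] ex_imp_if_imp_all])
qed

lemma all_ex_conj: "CImp (CAnd (CAll a) (CEx b)) (CEx (CAnd a b)) \<in> MS4_ext Ax"
proof -
  have "CImp (CAll a) (CAll (CImp (CNeg (CAnd a b)) (CNeg b))) \<in> MS4_ext Ax"
    by (rule all_mono, rule s_taut) auto
  then show ?thesis unfolding CEx_def by (rule taut_mp2[OF _ allK]) auto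
qed

lemma conj_mono:
  assumes "CImp a b \<in> MS4_ext Ax" and "CImp c d \<in> MS4_ext Ax"
  shows "CImp (CAnd a c) (CAnd b d) \<in> MS4_ext Ax"
  using assms by (rule taut_mp2) auto

lemma disj_mono:
  assumes "CImp a b \<in> MS4_ext Ax" and "CImp c d \<in> MS4_ext Ax"
  shows "CImp (COr a c) (COr b d) \<in> MS4_ext Ax"
  using assms by (rule taut_mp2) auto

lemma MS4_equiv_refl: "MS4_equiv Ax a a"
  by (auto intro: s_taut)

lemma MS4_equiv_trans: "MS4_equiv Ax a b \<Longrightarrow> MS4_equiv Ax b c \<Longrightarrow> MS4_equiv Ax a c"
  using imp_trans by blast

lemma MS4_equiv_mp: "MS4_equiv Ax a b \<Longrightarrow> a \<in> MS4_ext Ax \<Longrightarrow> b \<in> MS4_ext Ax"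
  using s_mp by blast

lemma MS4_equiv_neg: "MS4_equiv Ax a b \<Longrightarrow> MS4_equiv Ax (CNeg a) (CNeg b)"
  using contrapos by blast

lemma MS4_equiv_conj:
  "MS4_equiv Ax a b \<Longrightarrow> MS4_equiv Ax c d \<Longrightarrow> MS4_equiv Ax (CAnd a c) (CAnd b d)"
  using conj_mono by blast

lemma MS4_equiv_disj:
  "MS4_equiv Ax a b \<Longrightarrow> MS4_equiv Ax c d \<Longrightarrow> MS4_equiv Ax (COr a c) (COr b d)"
  using disj_mono by blast

lemma MS4_equiv_imp:
  "MS4_equiv Ax a b \<Longrightarrow> MS4_equiv Ax c d \<Longrightarrow> MS4_equiv Ax (CImp a c) (CImp b d)"
  by (auto intro: taut_mp2)

lemma MS4_equiv_box: "MS4_equiv Ax a b \<Longrightarrow> MS4_equiv Ax (CBox a) (CBox b)"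
  using box_mono by blast

lemma MS4_equiv_all: "MS4_equiv Ax a b \<Longrightarrow> MS4_equiv Ax (CAll a) (CAll b)"
  using all_mono by blast

lemma MS4_equiv_ex: "MS4_equiv Ax a b \<Longrightarrow> MS4_equiv Ax (CEx a) (CEx b)"
  using ex_mono by blast

lemma MS4_equiv_dia: "MS4_equiv Ax a b \<Longrightarrow> MS4_equiv Ax (CDia a) (CDia b)"
  unfolding CDia_def by (intro MS4_equiv_neg MS4_equiv_box)

lemmas MS4_equiv_congs =
  MS4_equiv_neg MS4_equiv_conj MS4_equiv_disj MS4_equiv_imp
  MS4_equiv_box MS4_equiv_all MS4_equiv_ex MS4_equiv_dia

lemma strict_imp_intro: "CImp a b \<in> MS4_ext Ax \<Longrightarrow> strict_imp a b \<in> MS4_ext Ax"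
  by (rule s_boxnec, erule taut_mp) auto

lemma strict_imp_imp: "strict_imp a b \<in> MS4_ext Ax \<Longrightarrow> CImp a b \<in> MS4_ext Ax"
  by (drule s_mp[OF _ boxT], erule taut_mp) auto

lemma strict_imp_mp: "strict_imp a b \<in> MS4_ext Ax \<Longrightarrow> a \<in> MS4_ext Ax \<Longrightarrow> b \<in> MS4_ext Ax"
  using s_mp strict_imp_imp by blast

lemma strict_imp_deduction:
  assumes "CImp c (CBox c) \<in> MS4_ext Ax" and "CImp (CAnd c a) b \<in> MS4_ext Ax"
  shows "CImp c (strict_imp a b) \<in> MS4_ext Ax"
proof -
  from assms(2) have "CImp c (COr (CNeg a) b) \<in> MS4_ext Ax"
    by (rule taut_mp) auto
  then show ?thesis by (rule imp_trans[OF assms(1) box_mono])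
qed

lemma goedel_imp_box: "CImp (goedel a) (CBox (goedel a)) \<in> MS4_ext Ax"
proof (induction a)
  case IBot
  show ?case by (simp add: s_taut)
next
  case (IAnd a b)
  then show ?case by (simp add: imp_trans[OF conj_mono box_conj])
next
  case (IOr a b)
  then show ?case by (simp add: imp_trans[OF disj_mono box_disj])
next
  case (IEx a)
  then show ?case by (simp add: imp_trans[OF ex_mono ex_box_imp_box_ex])
qed (simp_all add: box4)

lemma goedel_isubst:
  "MS4_equiv Ax (goedel (isubst s a)) (csubst (goedel \<circ> s) (goedel a))"
proof (induction a)
  case (IVar n)
  show ?case by (simp add: goedel_imp_box boxT)
qed (simp_all add: MS4_equiv_refl MS4_equiv_congs)

lemma goedel_IPC: "a \<in> IPC \<Longrightarrow> goedel a \<in> MS4_ext Ax"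
proof (induction rule: IPC.induct)
  case (ipc1 a b)
  show ?case
    by (simp, rule strict_imp_intro, rule strict_imp_deduction[OF goedel_imp_box], rule s_taut) auto
next
  case (ipc2 a b c)
  let ?A = "goedel a" and ?B = "goedel b" and ?C = "goedel c"
  have "CImp (CAnd (CAnd (strict_imp ?A (strict_imp ?B ?C)) (strict_imp ?A ?B)) ?A) ?C \<in> MS4_ext Ax"
    by (rule taut_mp3[OF boxT[of "COr (CNeg ?A) (strict_imp ?B ?C)"] boxT[of "COr (CNeg ?A) ?B"]
          boxT[of "COr (CNeg ?B) ?C"]]) auto
  then show ?case
    by (simp, intro strict_imp_intro strict_imp_deduction box4 imp_trans[OF conj_mono box_conj])
next
  case (ipc5 a b)
  show ?case
    by (simp, rule strict_imp_intro, rule strict_imp_deduction[OF goedel_imp_box], rule s_taut) auto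
next
  case (ipc8 a b c)
  let ?A = "goedel a" and ?B = "goedel b" and ?C = "goedel c"
  have "CImp (CAnd (CAnd (strict_imp ?A ?C) (strict_imp ?B ?C)) (COr ?A ?B)) ?C \<in> MS4_ext Ax"
    by (rule taut_mp2[OF boxT[of "COr (CNeg ?A) ?C"] boxT[of "COr (CNeg ?B) ?C"]]) auto
  then show ?case
    by (simp, intro strict_imp_intro strict_imp_deduction box4 imp_trans[OF conj_mono box_conj])
next
  case (ipc_mp a b)
  then show ?case by (simp add: strict_imp_mp)
qed (simp, rule strict_imp_intro, rule s_taut, simp)+

lemma strict_iff_intro:
  assumes "MS4_equiv Ax a b"
  shows "CAnd (strict_imp a b) (strict_imp b a) \<in> MS4_ext Ax"
proof -
  from assms have "strict_imp a b \<in> MS4_ext Ax" and "strict_imp b a \<in> MS4_ext Ax"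
    by (simp_all add: strict_imp_intro)
  then show ?thesis by (rule taut_mp2) auto
qed

lemma box_all_conj_equiv:
  "MS4_equiv Ax (CBox (CAll (CAnd a b))) (CAnd (CBox (CAll a)) (CBox (CAll b)))"
proof
  have "CImp (CBox (CAll (CAnd a b))) (CBox (CAll a)) \<in> MS4_ext Ax"
    "CImp (CBox (CAll (CAnd a b))) (CBox (CAll b)) \<in> MS4_ext Ax"
    by (rule box_mono, rule all_mono, rule s_taut, simp)+
  then show "CImp (CBox (CAll (CAnd a b))) (CAnd (CBox (CAll a)) (CBox (CAll b))) \<in> MS4_ext Ax"
    by (rule taut_mp2) auto
  show "CImp (CAnd (CBox (CAll a)) (CBox (CAll b))) (CBox (CAll (CAnd a b))) \<in> MS4_ext Ax"
    by (rule imp_trans[OF box_conj box_mono[OF all_conj]])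
qed

lemma ex_disj_equiv: "MS4_equiv Ax (CEx (COr a b)) (COr (CEx a) (CEx b))"
proof
  have "CImp (CAnd (CAll (CNeg a)) (CAll (CNeg b))) (CAll (CNeg (COr a b))) \<in> MS4_ext Ax"
    by (rule imp_trans[OF all_conj all_mono], rule s_taut) auto
  then show "CImp (CEx (COr a b)) (COr (CEx a) (CEx b)) \<in> MS4_ext Ax"
    unfolding CEx_def by (rule taut_mp) auto
  have "CImp (CEx a) (CEx (COr a b)) \<in> MS4_ext Ax" "CImp (CEx b) (CEx (COr a b)) \<in> MS4_ext Ax"
    by (rule ex_mono, rule s_taut, simp)+
  then show "CImp (COr (CEx a) (CEx b)) (CEx (COr a b)) \<in> MS4_ext Ax"
    by (rule taut_mp2) auto
qed

lemma goedel_MIPC_ext: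
  assumes "a \<in> MIPC_ext Ax'" and "goedel ` Ax' \<subseteq> MS4_ext Ax"
  shows "goedel a \<in> MS4_ext Ax"
  using assms(1)
proof induction
  case (m_ipc a)
  then show ?case by (rule goedel_IPC)
next
  case (m_extra a)
  then show ?case using assms(2) by auto
next
  case m_a1
  show ?case by (simp add: IIff_def strict_iff_intro box_all_conj_equiv)
next
  case m_a2
  show ?case by (simp add: strict_imp_intro imp_trans[OF boxT allT])
next
  case m_a3
  show ?case by (simp add: strict_imp_intro imp_trans[OF box4 box_mono[OF box_all_imp_all_box_all]])
next
  case m_e1
  show ?case by (simp add: IIff_def strict_iff_intro ex_disj_equiv)
next
  case m_e2
  show ?case by (simp add: strict_imp_intro ex_intro)
next
  case m_e3
  show ?case by (simp add: strict_imp_intro ex_ex_imp_ex)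
next
  case m_e4
  show ?case
    by (simp, rule strict_imp_intro,
        rule taut_mp2[OF ex_imp_all_ex all_ex_conj[of "CEx (CBox cp)" "CBox cq"]]) auto
next
  case m_c1
  show ?case by (simp add: strict_imp_intro ex_imp_if_imp_all[OF box_all_imp_all_box_all])
next
  case m_c2
  have "CImp (CEx (CBox cp)) (CBox (CEx (CBox cp))) \<in> MS4_ext Ax"
    using goedel_imp_box[of "IEx ip"] by simp
  then show ?case by (simp add: strict_imp_intro imp_trans[OF _ box_mono[OF ex_imp_all_ex]])
next
  case (m_mp a b)
  then show ?case by (simp add: strict_imp_mp)
next
  case (m_subst a s)
  then show ?case using goedel_isubst MS4_equiv_mp s_subst by blast
next
  case (m_nec a)
  then show ?case by (simp add: s_boxnec s_allnec)
qed

lemma MS4_ext_eqI: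
  assumes "X \<subseteq> MS4_ext Y" and "Y \<subseteq> MS4_ext X"
  shows "MS4_ext X = MS4_ext Y"
proof -
  have "MS4_ext A \<subseteq> MS4_ext B" if "A \<subseteq> MS4_ext B" for A B
  proof
    fix a assume "a \<in> MS4_ext A"
    then show "a \<in> MS4_ext B"
      by induction (blast intro: MS4_ext.intros that[THEN subsetD])+
  qed
  with assms show ?thesis by blast
qed

abbreviation kur_axiom :: iform where
  "kur_axiom \<equiv> IImp (IAll (INeg (INeg ip))) (INeg (INeg (IAll ip)))"

abbreviation gkur_axiom_dia :: cform where
  "gkur_axiom_dia \<equiv> CImp (CBox (CAll (CDia (CBox cp)))) (CDia (CBox (CAll cp)))"

abbreviation gkur_axiom_box :: cform where
  "gkur_axiom_box \<equiv>
    CImp (CBox (CNeg (CBox (CAll (CNeg cp))))) (CNeg (CBox (CAll (CNeg (CBox (CDia cp))))))"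

lemma goedel_neg_equiv: "MS4_equiv Ax (goedel (INeg a)) (CBox (CNeg (goedel a)))"
  by (simp add: INeg_def MS4_equiv_box s_taut)

lemma goedel_double_neg_equiv: "MS4_equiv Ax (goedel (INeg (INeg a))) (CBox (CDia (goedel a)))"
  unfolding CDia_def
  by (rule MS4_equiv_trans[OF goedel_neg_equiv MS4_equiv_box[OF MS4_equiv_neg[OF goedel_neg_equiv]]])

lemma box_all_box_equiv: "MS4_equiv Ax (CBox (CAll (CBox a))) (CBox (CAll a))"
  using box_mono[OF all_mono[OF boxT]] imp_trans[OF box4 box_mono[OF box_all_imp_all_box]]
  by blast

lemma goedel_kur_axiom_equiv:
  "MS4_equiv Ax (goedel kur_axiom)
     (strict_imp (CBox (CAll (CDia (CBox cp)))) (CBox (CDia (CBox (CAll cp)))))"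
proof -
  have antecedent:
    "MS4_equiv Ax (CBox (CAll (goedel (INeg (INeg ip))))) (CBox (CAll (CDia (CBox cp))))"
    using MS4_equiv_trans[OF
        MS4_equiv_box[OF MS4_equiv_all[OF goedel_double_neg_equiv[where a = ip]]]
        box_all_box_equiv]
    by simp
  have "MS4_equiv Ax (goedel (INeg (INeg (IAll ip)))) (CBox (CDia (CBox (CAll (CBox cp)))))"
    using goedel_double_neg_equiv[where a = "IAll ip"] by simp
  then have consequent:
    "MS4_equiv Ax (goedel (INeg (INeg (IAll ip)))) (CBox (CDia (CBox (CAll cp))))"
    by (rule MS4_equiv_trans[OF _ MS4_equiv_box[OF MS4_equiv_dia[OF box_all_box_equiv]]])
  show ?thesis
    using MS4_equiv_box[OF MS4_equiv_disj[OF MS4_equiv_neg[OF antecedent] consequent]] by simp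
qed

lemma strict_imp_box_iff:
  "strict_imp (CBox a) (CBox b) \<in> MS4_ext Ax \<longleftrightarrow> CImp (CBox a) b \<in> MS4_ext Ax"
proof
  assume "strict_imp (CBox a) (CBox b) \<in> MS4_ext Ax"
  then show "CImp (CBox a) b \<in> MS4_ext Ax"
    by (rule imp_trans[OF strict_imp_imp boxT])
next
  assume "CImp (CBox a) b \<in> MS4_ext Ax"
  then show "strict_imp (CBox a) (CBox b) \<in> MS4_ext Ax"
    by (intro strict_imp_intro imp_trans[OF box4 box_mono])
qed

lemma goedel_kur_axiom_iff: "goedel kur_axiom \<in> MS4_ext Ax \<longleftrightarrow> gkur_axiom_dia \<in> MS4_ext Ax"
  using goedel_kur_axiom_equiv[of Ax] strict_imp_box_iff MS4_equiv_mp by blast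

lemma gkur_axiom_dia_iff_box: "gkur_axiom_dia \<in> MS4_ext Ax \<longleftrightarrow> gkur_axiom_box \<in> MS4_ext Ax"
proof
  assume "gkur_axiom_dia \<in> MS4_ext Ax"
  from s_subst[OF this, of "\<lambda>_. CNeg cp"] show "gkur_axiom_box \<in> MS4_ext Ax"
    by (simp, rule taut_mp) (auto simp: CDia_def)
next
  assume "gkur_axiom_box \<in> MS4_ext Ax"
  then have "csubst (\<lambda>_. CNeg cp) gkur_axiom_box \<in> MS4_ext Ax"
    by (rule s_subst)
  moreover have "MS4_equiv Ax (csubst (\<lambda>_. CNeg cp) gkur_axiom_box)
      (CImp (CBox (CNeg (CBox (CAll cp)))) (CNeg (CBox (CAll (CDia (CBox cp))))))"
    unfolding CDia_def by (simp, intro MS4_equiv_congs) (auto intro: s_taut)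
  ultimately have "CImp (CBox (CNeg (CBox (CAll cp)))) (CNeg (CBox (CAll (CDia (CBox cp)))))
      \<in> MS4_ext Ax"
    using MS4_equiv_mp by blast
  then show "gkur_axiom_dia \<in> MS4_ext Ax"
    by (rule taut_mp) (auto simp: CDia_def)
qed

lemma GKur_eq_dia: "GKur = MS4_ext {gkur_axiom_dia}"
  unfolding GKur_def
proof (rule MS4_ext_eqI)
  have "goedel kur_axiom \<in> MS4_ext {gkur_axiom_dia}"
    using goedel_kur_axiom_iff s_extra by blast
  then show "goedel ` Kur \<subseteq> MS4_ext {gkur_axiom_dia}"
    unfolding Kur_def using goedel_MIPC_ext by blast
  have "goedel kur_axiom \<in> MS4_ext (goedel ` Kur)"
    unfolding Kur_def by (intro s_extra imageI m_extra) simp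
  then show "{gkur_axiom_dia} \<subseteq> MS4_ext (goedel ` Kur)"
    using goedel_kur_axiom_iff by blast
qed

lemma MS4_ext_dia_eq_box: "MS4_ext {gkur_axiom_dia} = MS4_ext {gkur_axiom_box}"
  using gkur_axiom_dia_iff_box s_extra by (intro MS4_ext_eqI) blast+

theorem proposition3p18:
  shows "GKur = MS4_ext {CImp (CBox (CAll (CDia (CBox cp)))) (CDia (CBox (CAll cp)))}
       \<and> GKur = MS4_ext {CImp (CBox (CNeg (CBox (CAll (CNeg cp)))))
                              (CNeg (CBox (CAll (CNeg (CBox (CDia cp))))))}"
  using GKur_eq_dia MS4_ext_dia_eq_box by simp

end
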